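(* Let $\alpha\in(0,1)$ and let $Z_1,Z_2,\dots$ be i.i.d. random variables with the Sibuya$(\alpha)$ distribution $P(Z=k)=(-1)^{k-1}\binom{\alpha}{k}$, $k=1,2,\dots$. Let $\sigma_\alpha(0)=0$, $\sigma_\alpha(n)=\sum_{j=1}^n Z_j$ for $n\in\mathbb{N}$, and let $L_\alpha(t)=\max\{n\in\mathbb{N}_0:\sigma_\alpha(n)\le t\}$ for $t\in\mathbb{N}_0$ (the Sibuya counting process). Let $\sigma_*$ be an $\alpha$-stable subordinator, i.e. an increasing Lévy process with $\mathbb{E}e^{-\xi\sigma_*(t)}=e^{-t\xi^\alpha}$ for $\xi\ge 0$, and let $L_*(t)=\inf\{x\ge 0:\sigma_*(x)>t\}$ be its inverse hitting time process. Then for every $t\in\mathbb{R}^+$, the random variable $n^{-\alpha}L_\alpha(\lfloor nt\rfloor)$ converges in distribution to $L_*(t)$ as $n\to\infty$.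
   Context: $\lfloor a\rfloor$ denotes the largest integer less than or equal to $a$; $\mathbb{N}_0=\mathbb{N}\cup\{0\}$. The binomial coefficient with real upper argument is $\binom{x}{k}=x(x-1)\cdots(x-k+1)/k!$. *)

theory Defs
  imports "HOL-Probability.Probability"
begin

definition sibuya_pmf :: "real \<Rightarrow> nat \<Rightarrow> real" where
  "sibuya_pmf \<alpha> k = (-1) ^ (k - 1) * (\<alpha> gchoose k)"

definition sibuya_sum :: "(nat \<Rightarrow> 'a \<Rightarrow> nat) \<Rightarrow> nat \<Rightarrow> 'a \<Rightarrow> nat" where
  "sibuya_sum Z n \<omega> = (\<Sum>j\<in>{1..n}. Z j \<omega>)"

definition sibuya_count :: "(nat \<Rightarrow> 'a \<Rightarrow> nat) \<Rightarrow> nat \<Rightarrow> 'a \<Rightarrow> nat" where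
  "sibuya_count Z t \<omega> = Max {n. sibuya_sum Z n \<omega> \<le> t}"

definition stable_subordinator :: "'b measure \<Rightarrow> real \<Rightarrow> (real \<Rightarrow> 'b \<Rightarrow> real) \<Rightarrow> bool" where
  "stable_subordinator N \<alpha> S \<longleftrightarrow>
     prob_space N \<and>
     (\<forall>t\<ge>0. S t \<in> borel_measurable N) \<and>
     (\<forall>\<omega>\<in>space N. S 0 \<omega> = 0 \<and> mono_on {0..} (\<lambda>t. S t \<omega>) \<and>
        (\<forall>t\<ge>0. continuous (at_right t) (\<lambda>s. S s \<omega>))) \<and>
     (\<forall>(n::nat) (ts::nat \<Rightarrow> real). 0 \<le> ts 0 \<and> (\<forall>i<n. ts i \<le> ts (Suc i)) \<longrightarrow>
        prob_space.indep_vars N (\<lambda>_. borel) (\<lambda>i \<omega>. S (ts (Suc i)) \<omega> - S (ts i) \<omega>) {..<n}) \<and>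
     (\<forall>s\<ge>0. \<forall>t\<ge>0. distr N borel (\<lambda>\<omega>. S (s + t) \<omega> - S s \<omega>) = distr N borel (S t)) \<and>
     (\<forall>t\<ge>0. \<forall>\<xi>\<ge>0. prob_space.expectation N (\<lambda>\<omega>. exp (- \<xi> * S t \<omega>)) = exp (- t * \<xi> powr \<alpha>))"

definition inv_hitting :: "(real \<Rightarrow> 'b \<Rightarrow> real) \<Rightarrow> real \<Rightarrow> 'b \<Rightarrow> real" where
  "inv_hitting S t \<omega> = Inf {x. 0 \<le> x \<and> t < S x \<omega>}"

end

theory Submission
  imports Defs "HOL-Real_Asymp.Real_Asymp"
begin

text \<open>
  The counting process and the partial sums are inverse to each other:
  \<open>n\<^sup>-\<^sup>\<alpha> L(\<lfloor>n t\<rfloor>) \<le> x\<close> holds exactly when the sum of the first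
  \<open>\<lfloor>x n\<^sup>\<alpha>\<rfloor> + 1\<close> Sibuya variables exceeds \<open>n t\<close>. A Sibuya variable has Laplace
  transform \<open>1 - (1 - e\<^sup>-\<^sup>s)\<^sup>\<alpha>\<close>, so the Laplace transform of that sum divided by \<open>n\<close>
  tends to \<open>exp (- x \<xi>\<^sup>\<alpha>)\<close>, the Laplace transform of \<open>S(x)\<close>. For nonnegative variables,
  convergence of Laplace transforms is convergence of all moments of \<open>exp (- X)\<close> on \<open>[0, 1]\<close>,
  which by Stone-Weierstrass gives weak convergence; hence the probability that the rescaled sum
  exceeds \<open>t\<close> tends to \<open>P(S(x) > t)\<close> as long as \<open>S(x)\<close> has no atom at \<open>t\<close>.

  On the side of the limit, right-continuity of the paths gives
  \<open>P(t < S(x)) \<le> P(L\<^sub>*(t) \<le> x) \<le> P(t \<le> S(x))\<close>, and self-similarity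
  (\<open>S(c\<^sup>\<alpha> x)\<close> has the law of \<open>c S(x)\<close>) squeezes the two bounds together at every continuity
  point \<open>x\<close> of the distribution function of \<open>L\<^sub>*(t)\<close>; this also excludes an atom of
  \<open>S(x)\<close> at \<open>t\<close>.
\<close>

section \<open>Laplace transforms and weak convergence\<close>

lemma integrable_continuous_comp_bounded:
  fixes g :: "real \<Rightarrow> real"
  assumes "finite_measure M" "continuous_on UNIV g" "U \<in> borel_measurable M"
    "\<And>\<omega>. \<omega> \<in> space M \<Longrightarrow> U \<omega> \<in> {a..b}"
  shows "integrable M (\<lambda>\<omega>. g (U \<omega>))"
proof -
  obtain B where B: "\<And>x. x \<in> g ` {a..b} \<Longrightarrow> norm x \<le> B"
    using compact_continuous_image[OF continuous_on_subset[OF assms(2)] compact_Icc]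
    by (meson bounded_iff compact_imp_bounded subset_UNIV)
  have [measurable]: "g \<in> borel_measurable borel"
    using assms(2) by (rule borel_measurable_continuous_onI)
  show ?thesis
    using assms(1,3,4) B by (intro finite_measure.integrable_const_bound[where B=B]) auto
qed

lemma integral_diff_le_uniform:
  fixes f h :: "'a \<Rightarrow> real"
  assumes "prob_space M" "integrable M f" "integrable M h"
    "\<And>\<omega>. \<omega> \<in> space M \<Longrightarrow> \<bar>f \<omega> - h \<omega>\<bar> \<le> c"
  shows "\<bar>(\<integral>\<omega>. f \<omega> \<partial>M) - (\<integral>\<omega>. h \<omega> \<partial>M)\<bar> \<le> c"
proof -
  have "\<bar>(\<integral>\<omega>. f \<omega> \<partial>M) - (\<integral>\<omega>. h \<omega> \<partial>M)\<bar> \<le> (\<integral>\<omega>. \<bar>f \<omega> - h \<omega>\<bar> \<partial>M)"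
    using assms(2,3) by (simp flip: Bochner_Integration.integral_diff)
  also have "\<dots> \<le> c"
    using assms by (intro prob_space.integral_le_const) auto
  finally show ?thesis .
qed

lemma moment_conv_imp_continuous_conv:
  fixes U :: "nat \<Rightarrow> 'a \<Rightarrow> real" and V :: "'b \<Rightarrow> real" and g :: "real \<Rightarrow> real"
  assumes M: "prob_space M" and N: "prob_space N"
    and U: "\<And>n. U n \<in> borel_measurable M" "\<And>n \<omega>. \<omega> \<in> space M \<Longrightarrow> U n \<omega> \<in> {0..1}"
    and V: "V \<in> borel_measurable N" "\<And>\<omega>. \<omega> \<in> space N \<Longrightarrow> V \<omega> \<in> {0..1}"
    and moments: "\<And>i. (\<lambda>n. \<integral>\<omega>. U n \<omega> ^ i \<partial>M) \<longlonglongrightarrow> (\<integral>\<omega>. V \<omega> ^ i \<partial>N)"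
    and g: "continuous_on UNIV g"
  shows "(\<lambda>n. \<integral>\<omega>. g (U n \<omega>) \<partial>M) \<longlonglongrightarrow> (\<integral>\<omega>. g (V \<omega>) \<partial>N)"
proof (rule LIMSEQ_I)
  interpret M: prob_space M by fact
  interpret N: prob_space N by fact
  fix r :: real assume "0 < r"
  then obtain p where "real_polynomial_function p" and gp: "\<And>x. x \<in> {0..1} \<Longrightarrow> \<bar>g x - p x\<bar> < r/3"
    using Stone_Weierstrass_real_polynomial_function[of "{0..1}" g "r/3"] g
    by (metis compact_Icc continuous_on_subset divide_pos_pos subset_UNIV zero_less_numeral)
  then obtain a d where p: "p = (\<lambda>x. \<Sum>i\<le>d. a i * x ^ i)"
    using real_polynomial_function_iff_sum by blast
  have intU: "integrable M (\<lambda>\<omega>. h (U n \<omega>))" if "continuous_on UNIV h" for h :: "real \<Rightarrow> real" and n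
    using M.finite_measure that U by (rule integrable_continuous_comp_bounded)
  have intV: "integrable N (\<lambda>\<omega>. h (V \<omega>))" if "continuous_on UNIV h" for h :: "real \<Rightarrow> real"
    using N.finite_measure that V by (rule integrable_continuous_comp_bounded)
  have "continuous_on UNIV p" "\<And>i. continuous_on UNIV (\<lambda>x::real. x ^ i)"
    unfolding p by (intro continuous_intros)+
  note cont = g this
  have "(\<lambda>n. \<Sum>i\<le>d. a i * (\<integral>\<omega>. U n \<omega> ^ i \<partial>M)) \<longlonglongrightarrow> (\<Sum>i\<le>d. a i * (\<integral>\<omega>. V \<omega> ^ i \<partial>N))"
    by (intro tendsto_intros moments)
  then have "(\<lambda>n. \<integral>\<omega>. p (U n \<omega>) \<partial>M) \<longlonglongrightarrow> (\<integral>\<omega>. p (V \<omega>) \<partial>N)"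
    unfolding p using intU[OF cont(3)] intV[OF cont(3)] by simp
  then obtain n0 where n0: "\<And>n. n \<ge> n0 \<Longrightarrow>
      \<bar>(\<integral>\<omega>. p (U n \<omega>) \<partial>M) - (\<integral>\<omega>. p (V \<omega>) \<partial>N)\<bar> < r/3"
    using LIMSEQ_D[of _ _ "r/3"] \<open>0 < r\<close> by (metis real_norm_def divide_pos_pos zero_less_numeral)
  have gpU: "\<bar>(\<integral>\<omega>. g (U n \<omega>) \<partial>M) - (\<integral>\<omega>. p (U n \<omega>) \<partial>M)\<bar> \<le> r/3" for n
    using M intU[OF cont(1)] intU[OF cont(2)] gp U(2)
    by (intro integral_diff_le_uniform) (auto intro: less_imp_le)
  have gpV: "\<bar>(\<integral>\<omega>. g (V \<omega>) \<partial>N) - (\<integral>\<omega>. p (V \<omega>) \<partial>N)\<bar> \<le> r/3"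
    using N intV[OF cont(1)] intV[OF cont(2)] gp V(2)
    by (intro integral_diff_le_uniform) (auto intro: less_imp_le)
  show "\<exists>n0. \<forall>n\<ge>n0. norm ((\<integral>\<omega>. g (U n \<omega>) \<partial>M) - (\<integral>\<omega>. g (V \<omega>) \<partial>N)) < r"
  proof (intro exI[of _ n0] allI impI)
    fix n assume "n \<ge> n0"
    with n0[of n] gpU[of n] gpV
    show "norm ((\<integral>\<omega>. g (U n \<omega>) \<partial>M) - (\<integral>\<omega>. g (V \<omega>) \<partial>N)) < r"
      unfolding real_norm_def by linarith
  qed
qed

lemma laplace_conv_imp_weak_conv:
  fixes X :: "nat \<Rightarrow> 'a \<Rightarrow> real" and Y :: "'b \<Rightarrow> real"
  assumes M: "prob_space M" and N: "prob_space N"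
    and X: "\<And>n. X n \<in> borel_measurable M" "\<And>n \<omega>. \<omega> \<in> space M \<Longrightarrow> 0 \<le> X n \<omega>"
    and Y: "Y \<in> borel_measurable N" "\<And>\<omega>. \<omega> \<in> space N \<Longrightarrow> 0 \<le> Y \<omega>"
    and laplace: "\<And>m::nat. (\<lambda>n. \<integral>\<omega>. exp (- real m * X n \<omega>) \<partial>M) \<longlonglongrightarrow> (\<integral>\<omega>. exp (- real m * Y \<omega>) \<partial>N)"
  shows "weak_conv_m (\<lambda>n. distr M borel (\<lambda>\<omega>. exp (- X n \<omega>))) (distr N borel (\<lambda>\<omega>. exp (- Y \<omega>)))"
proof (rule integral_bdd_continuous_conv_imp_weak_conv)
  show "real_distribution (distr M borel (\<lambda>\<omega>. exp (- X n \<omega>)))" for n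
    using X(1) by (simp add: prob_space.real_distribution_distr[OF M])
  show "real_distribution (distr N borel (\<lambda>\<omega>. exp (- Y \<omega>)))"
    using Y(1) by (simp add: prob_space.real_distribution_distr[OF N])
  fix f :: "real \<Rightarrow> real" assume "\<And>x. isCont f x"
  then have "continuous_on UNIV f" by (simp add: continuous_at_imp_continuous_on)
  have "(\<lambda>n. \<integral>\<omega>. f (exp (- X n \<omega>)) \<partial>M) \<longlonglongrightarrow> (\<integral>\<omega>. f (exp (- Y \<omega>)) \<partial>N)"
  proof (rule moment_conv_imp_continuous_conv[OF M N _ _ _ _ _ \<open>continuous_on UNIV f\<close>])
    have "exp (- x) ^ i = exp (- real i * x)" for x :: real and i
      by (simp flip: exp_of_nat_mult)
    then show "(\<lambda>n. \<integral>\<omega>. exp (- X n \<omega>) ^ i \<partial>M) \<longlonglongrightarrow> (\<integral>\<omega>. exp (- Y \<omega>) ^ i \<partial>N)" for i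
      using laplace[of i] by simp
  qed (use X Y in auto)
  then show "(\<lambda>n. \<integral>z. f z \<partial>distr M borel (\<lambda>\<omega>. exp (- X n \<omega>)))
      \<longlonglongrightarrow> (\<integral>z. f z \<partial>distr N borel (\<lambda>\<omega>. exp (- Y \<omega>)))"
    using X(1) Y(1) \<open>continuous_on UNIV f\<close>
    by (simp add: integral_distr borel_measurable_continuous_onI)
qed

lemma laplace_conv_imp_tail_conv:
  fixes X :: "nat \<Rightarrow> 'a \<Rightarrow> real" and Y :: "'b \<Rightarrow> real"
  assumes M: "prob_space M" and N: "prob_space N"
    and X: "\<And>n. X n \<in> borel_measurable M" "\<And>n \<omega>. \<omega> \<in> space M \<Longrightarrow> 0 \<le> X n \<omega>"
    and Y: "Y \<in> borel_measurable N" "\<And>\<omega>. \<omega> \<in> space N \<Longrightarrow> 0 \<le> Y \<omega>"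
    and laplace: "\<And>m::nat. (\<lambda>n. \<integral>\<omega>. exp (- real m * X n \<omega>) \<partial>M) \<longlonglongrightarrow> (\<integral>\<omega>. exp (- real m * Y \<omega>) \<partial>N)"
    and no_atom: "measure N {\<omega>\<in>space N. Y \<omega> = t} = 0"
  shows "(\<lambda>n. measure M {\<omega>\<in>space M. t < X n \<omega>}) \<longlonglongrightarrow> measure N {\<omega>\<in>space N. t < Y \<omega>}"
proof -
  interpret N: prob_space N by fact
  have tail: "measure (distr \<Omega> borel (\<lambda>\<omega>. exp (- W \<omega>))) {..<exp (- t)} =
      measure \<Omega> {\<omega>\<in>space \<Omega>. t < W \<omega>}"
    if "W \<in> borel_measurable \<Omega>" for \<Omega> and W :: "'c \<Rightarrow> real"
    using that by (simp add: measure_distr vimage_def Int_def conj_commute)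
  have "emeasure (distr N borel (\<lambda>\<omega>. exp (- Y \<omega>))) {exp (- t)} = emeasure N {\<omega>\<in>space N. Y \<omega> = t}"
    using Y(1) by (simp add: emeasure_distr vimage_def Int_def conj_commute)
  also have "\<dots> = 0"
    using no_atom Y(1) by (simp add: N.emeasure_eq_measure)
  finally have "(\<lambda>n. measure (distr M borel (\<lambda>\<omega>. exp (- X n \<omega>))) {..<exp (- t)})
      \<longlonglongrightarrow> measure (distr N borel (\<lambda>\<omega>. exp (- Y \<omega>))) {..<exp (- t)}"
    using laplace_conv_imp_weak_conv[OF assms(1-7)] X(1) Y(1)
    by (intro weak_conv_imp_continuity_set_conv)
       (auto simp: prob_space.real_distribution_distr[OF M] N.real_distribution_distr)
  then show ?thesis
    using X(1) Y(1) by (simp add: tail)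
qed

lemma cdf_distr:
  assumes "X \<in> borel_measurable M"
  shows "cdf (distr M borel X) x = measure M {\<omega>\<in>space M. X \<omega> \<le> x}"
  using assms by (simp add: cdf_def measure_distr vimage_def Int_def conj_commute)

lemma cdf_le_if_integral_cts_step_le:
  assumes \<mu>: "real_distribution \<mu>" and \<nu>: "real_distribution \<nu>"
    and le: "\<And>x y. x < y \<Longrightarrow> integral\<^sup>L \<mu> (cts_step x y) \<le> integral\<^sup>L \<nu> (cts_step x y)"
  shows "cdf \<mu> x \<le> cdf \<nu> x"
proof (rule tendsto_lowerbound)
  show "(cdf \<nu> \<longlongrightarrow> cdf \<nu> x) (at_right x)"
    using finite_borel_measure.cdf_is_right_cont[OF real_distribution.finite_borel_measure_M[OF \<nu>]]
    by (simp add: continuous_within)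
  show "\<forall>\<^sub>F y in at_right x. cdf \<mu> x \<le> cdf \<nu> y"
    using eventually_at_right_less[of x]
  proof eventually_elim
    case (elim y)
    have "cdf \<mu> x \<le> integral\<^sup>L \<mu> (cts_step x y)"
      using \<mu> elim by (rule real_distribution.cdf_cts_step)
    also have "\<dots> \<le> integral\<^sup>L \<nu> (cts_step x y)"
      using elim by (rule le)
    also have "\<dots> \<le> cdf \<nu> y"
      using \<nu> elim by (rule real_distribution.cdf_cts_step)
    finally show ?case .
  qed
qed simp

lemma distr_eq_if_laplace_eq:
  fixes X Y :: "'a \<Rightarrow> real"
  assumes N: "prob_space N"
    and X: "X \<in> borel_measurable N" "\<And>\<omega>. \<omega> \<in> space N \<Longrightarrow> 0 \<le> X \<omega>"
    and Y: "Y \<in> borel_measurable N" "\<And>\<omega>. \<omega> \<in> space N \<Longrightarrow> 0 \<le> Y \<omega>"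
    and laplace: "\<And>m::nat. (\<integral>\<omega>. exp (- real m * X \<omega>) \<partial>N) = (\<integral>\<omega>. exp (- real m * Y \<omega>) \<partial>N)"
  shows "distr N borel X = distr N borel Y"
proof -
  interpret prob_space N by fact
  define \<mu> where "\<mu> = distr N borel (\<lambda>\<omega>. exp (- X \<omega>))"
  define \<nu> where "\<nu> = distr N borel (\<lambda>\<omega>. exp (- Y \<omega>))"
  have distrs: "real_distribution \<mu>" "real_distribution \<nu>"
    unfolding \<mu>_def \<nu>_def using X(1) Y(1) by simp_all
  have "weak_conv_m (\<lambda>_. \<mu>) \<nu>"
    unfolding \<mu>_def \<nu>_def using laplace
    by (intro laplace_conv_imp_weak_conv[OF N N]) (use X Y in auto)
  have integral_eq: "integral\<^sup>L \<mu> f = integral\<^sup>L \<nu> f"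
    if "\<And>z. isCont f z" "\<And>z. \<bar>f z\<bar> \<le> 1" for f :: "real \<Rightarrow> real"
  proof -
    have "(\<lambda>_. integral\<^sup>L \<mu> f) \<longlonglongrightarrow> integral\<^sup>L \<nu> f"
      by (rule weak_conv_imp_integral_bdd_continuous_conv[where B=1])
         (use distrs \<open>weak_conv_m (\<lambda>_. \<mu>) \<nu>\<close> that in auto)
    then show ?thesis by (simp add: LIMSEQ_const_iff)
  qed
  have "integral\<^sup>L \<mu> (cts_step x y) = integral\<^sup>L \<nu> (cts_step x y)" if "x < y" for x y
  proof (rule integral_eq)
    have "continuous_on UNIV (cts_step x y)"
      using that by (intro uniformly_continuous_imp_continuous cts_step_uniformly_continuous)
    then show "isCont (cts_step x y) z" for z
      by (simp add: continuous_on_eq_continuous_at)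
    show "\<bar>cts_step x y z\<bar> \<le> 1" for z
      using that by (auto simp: cts_step_def)
  qed
  then have "\<mu> = \<nu>"
    using distrs by (intro cdf_unique ext antisym cdf_le_if_integral_cts_step_le) auto
  have "distr N borel X = distr \<mu> borel (\<lambda>u. - ln u)"
    unfolding \<mu>_def using X(1) by (subst distr_distr) (auto simp: comp_def)
  also have "\<dots> = distr N borel Y"
    unfolding \<open>\<mu> = \<nu>\<close> \<nu>_def using Y(1) by (subst distr_distr) (auto simp: comp_def)
  finally show ?thesis .
qed

section \<open>The stable subordinator and its inverse hitting time\<close>

lemma stable_subordinatorD:
  assumes "stable_subordinator N \<alpha> S"
  shows stable_subordinator_prob_space: "prob_space N"
    and stable_subordinator_measurable: "\<And>y. 0 \<le> y \<Longrightarrow> S y \<in> borel_measurable N"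
    and stable_subordinator_zero: "\<And>\<omega>. \<omega> \<in> space N \<Longrightarrow> S 0 \<omega> = 0"
    and stable_subordinator_mono: "\<And>\<omega>. \<omega> \<in> space N \<Longrightarrow> mono_on {0..} (\<lambda>y. S y \<omega>)"
    and stable_subordinator_right_cont:
      "\<And>\<omega> y. \<omega> \<in> space N \<Longrightarrow> 0 \<le> y \<Longrightarrow> continuous (at_right y) (\<lambda>s. S s \<omega>)"
    and stable_subordinator_laplace:
      "\<And>y \<xi>. 0 \<le> y \<Longrightarrow> 0 \<le> \<xi> \<Longrightarrow> (\<integral>\<omega>. exp (- \<xi> * S y \<omega>) \<partial>N) = exp (- y * \<xi> powr \<alpha>)"
  using assms unfolding stable_subordinator_def by blast+

lemma stable_subordinator_nonneg:
  assumes "stable_subordinator N \<alpha> S" "\<omega> \<in> space N" "0 \<le> y"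
  shows "0 \<le> S y \<omega>"
  using stable_subordinator_mono[OF assms(1,2)] stable_subordinator_zero[OF assms(1,2)] assms(3)
  by (metis atLeast_iff mono_onD order_refl)

lemma stable_subordinator_self_similar:
  assumes S: "stable_subordinator N \<alpha> S" and "0 \<le> y" "0 < c"
  shows "distr N borel (S (c powr \<alpha> * y)) = distr N borel (\<lambda>\<omega>. c * S y \<omega>)"
proof (rule distr_eq_if_laplace_eq)
  show "prob_space N"
    using S by (rule stable_subordinator_prob_space)
  show "S (c powr \<alpha> * y) \<in> borel_measurable N" "(\<lambda>\<omega>. c * S y \<omega>) \<in> borel_measurable N"
    using stable_subordinator_measurable[OF S] assms by simp_all
  show "0 \<le> S (c powr \<alpha> * y) \<omega>" "0 \<le> c * S y \<omega>" if "\<omega> \<in> space N" for \<omega>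
    using stable_subordinator_nonneg[OF S that] assms by simp_all
  fix m :: nat
  have "(\<integral>\<omega>. exp (- real m * S (c powr \<alpha> * y) \<omega>) \<partial>N) = exp (- (c powr \<alpha> * y) * real m powr \<alpha>)"
    using stable_subordinator_laplace[OF S] assms by simp
  also have "\<dots> = exp (- y * (real m * c) powr \<alpha>)"
    using assms by (simp add: powr_mult)
  also have "\<dots> = (\<integral>\<omega>. exp (- (real m * c) * S y \<omega>) \<partial>N)"
    using stable_subordinator_laplace[OF S] assms by simp
  finally show "(\<integral>\<omega>. exp (- real m * S (c powr \<alpha> * y) \<omega>) \<partial>N) =
      (\<integral>\<omega>. exp (- real m * (c * S y \<omega>)) \<partial>N)"
    by (simp add: mult.assoc)
qed

lemma stable_subordinator_tail_le:
  assumes S: "stable_subordinator N \<alpha> S" and "0 < \<alpha>" "0 \<le> y" "y < y'" "0 < t"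
  shows "measure N {\<omega>\<in>space N. t \<le> S y \<omega>} \<le> measure N {\<omega>\<in>space N. t < S y' \<omega>}"
proof (cases "y = 0")
  case True
  then have "{\<omega>\<in>space N. t \<le> S y \<omega>} = {}"
    using stable_subordinator_zero[OF S] \<open>0 < t\<close> by auto
  then show ?thesis
    by (simp only: measure_empty measure_nonneg)
next
  case False
  interpret prob_space N
    using S by (rule stable_subordinator_prob_space)
  define c where "c = (y' / y) powr (1 / \<alpha>)"
  have "1 < c"
    unfolding c_def using False assms by (intro gr_one_powr) auto
  have y': "y' = c powr \<alpha> * y"
    unfolding c_def using False assms by (simp add: powr_powr)
  have [measurable]: "S y \<in> borel_measurable N" "S y' \<in> borel_measurable N"
    using stable_subordinator_measurable[OF S] assms by simp_all
  have "measure N {\<omega>\<in>space N. t \<le> S y \<omega>} \<le> measure N {\<omega>\<in>space N. t < c * S y \<omega>}"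
  proof (rule finite_measure_mono)
    have "t < c * S y \<omega>" if "t \<le> S y \<omega>" for \<omega>
      using that \<open>1 < c\<close> \<open>0 < t\<close> by (smt (verit) mult_less_cancel_right1)
    then show "{\<omega>\<in>space N. t \<le> S y \<omega>} \<subseteq> {\<omega>\<in>space N. t < c * S y \<omega>}"
      by blast
  qed measurable
  also have "\<dots> = measure (distr N borel (\<lambda>\<omega>. c * S y \<omega>)) {t<..}"
    by (simp add: measure_distr vimage_def Int_def conj_commute)
  also have "\<dots> = measure (distr N borel (S y')) {t<..}"
    unfolding y' using stable_subordinator_self_similar[OF S] assms \<open>1 < c\<close> by simp
  also have "\<dots> = measure N {\<omega>\<in>space N. t < S y' \<omega>}"
    by (simp add: measure_distr vimage_def Int_def conj_commute)
  finally show ?thesis .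
qed

lemma stable_subordinator_AE_exceeds:
  assumes S: "stable_subordinator N \<alpha> S"
  shows "AE \<omega> in N. \<exists>j::nat. t < S (real j) \<omega>"
proof -
  interpret prob_space N
    using S by (rule stable_subordinator_prob_space)
  have [measurable]: "S (real j) \<in> borel_measurable N" for j :: nat
    using stable_subordinator_measurable[OF S] by simp
  define E where "E = {\<omega>\<in>space N. \<forall>j::nat. S (real j) \<omega> \<le> t}"
  have "measure N E \<le> exp (t - real j)" for j :: nat
  proof -
    have "measure N E \<le> measure N {\<omega>\<in>space N. exp (- t) \<le> exp (- S (real j) \<omega>)}"
      unfolding E_def by (intro finite_measure_mono) auto
    also have "\<dots> \<le> (\<integral>\<omega>. exp (- S (real j) \<omega>) \<partial>N) / exp (- t)"
      using stable_subordinator_nonneg[OF S]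
      by (intro integral_Markov_inequality_measure[where A="space N"]
          integrable_const_bound[where B=1]) auto
    also have "\<dots> = exp (t - real j)"
      using stable_subordinator_laplace[OF S, of "real j" 1]
      by (simp add: exp_diff exp_minus field_simps)
    finally show ?thesis .
  qed
  moreover have "(\<lambda>j::nat. exp (t - real j)) \<longlonglongrightarrow> 0"
    by real_asymp
  ultimately have "measure N E \<le> 0"
    by (intro LIMSEQ_le_const[where X="\<lambda>j::nat. exp (t - real j)"]) auto
  then have "emeasure N E = 0"
    by (simp add: emeasure_eq_measure measure_le_0_iff)
  then show ?thesis
    by (subst AE_iff_measurable[where N=E]) (auto simp: E_def not_less)
qed

lemma inv_hitting_le:
  assumes "0 \<le> y" "t < S y \<omega>"
  shows "inv_hitting S t \<omega> \<le> y"
  unfolding inv_hitting_def using assms by (intro cInf_lower) (auto intro: bdd_belowI[where m=0])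

lemma inv_hitting_nonneg:
  assumes "0 \<le> y" "t < S y \<omega>"
  shows "0 \<le> inv_hitting S t \<omega>"
  unfolding inv_hitting_def using assms by (intro cInf_greatest) auto

lemma le_tail_if_inv_hitting_le:
  assumes mono: "mono_on {0..} (\<lambda>s. S s \<omega>)" and cont: "continuous (at_right y) (\<lambda>s. S s \<omega>)"
    and "0 \<le> x" "t < S x \<omega>" "0 \<le> y" "inv_hitting S t \<omega> \<le> y"
  shows "t \<le> S y \<omega>"
proof (rule ccontr)
  assume "\<not> t \<le> S y \<omega>"
  then have "S y \<omega> < t" by simp
  moreover have "((\<lambda>s. S s \<omega>) \<longlongrightarrow> S y \<omega>) (at_right y)"
    using cont by (simp add: continuous_within)
  ultimately have "\<forall>\<^sub>F s in at_right y. S s \<omega> < t"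
    by (rule order_tendstoD(2)[rotated])
  then obtain b where "y < b" and below_b: "\<And>s. y < s \<Longrightarrow> s < b \<Longrightarrow> S s \<omega> < t"
    unfolding eventually_at_right_field by blast
  have "b \<le> inv_hitting S t \<omega>"
    unfolding inv_hitting_def
  proof (rule cInf_greatest)
    show "{x. 0 \<le> x \<and> t < S x \<omega>} \<noteq> {}"
      using assms by blast
    fix s assume s: "s \<in> {x. 0 \<le> x \<and> t < S x \<omega>}"
    show "b \<le> s"
    proof (rule ccontr)
      assume "\<not> b \<le> s"
      have "S s \<omega> < t"
      proof (cases "s \<le> y")
        case True
        then have "S s \<omega> \<le> S y \<omega>"
          using s by (intro mono_onD[OF mono]) auto
        with \<open>S y \<omega> < t\<close> show ?thesis by simp
      next
        case False
        with \<open>\<not> b \<le> s\<close> show ?thesis by (intro below_b) auto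
      qed
      with s show False by simp
    qed
  qed
  with \<open>y < b\<close> \<open>inv_hitting S t \<omega> \<le> y\<close> show False by simp
qed

lemma inv_hitting_less_iff:
  assumes mono: "mono_on {0..} (\<lambda>s. S s \<omega>)" and "0 \<le> x" "t < S x \<omega>"
  shows "inv_hitting S t \<omega> < c \<longleftrightarrow>
    (\<exists>q::rat. 0 \<le> q \<and> real_of_rat q < c \<and> t < S (real_of_rat q) \<omega>)"
proof
  assume "inv_hitting S t \<omega> < c"
  moreover have "{x. 0 \<le> x \<and> t < S x \<omega>} \<noteq> {}"
    using assms by blast
  ultimately have "\<exists>a\<in>{x. 0 \<le> x \<and> t < S x \<omega>}. a < c"
    unfolding inv_hitting_def by (intro cInf_lessD)
  then obtain a where a: "0 \<le> a" "t < S a \<omega>" "a < c"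
    by blast
  obtain q :: rat where q: "a < real_of_rat q" "real_of_rat q < c"
    using of_rat_dense[OF \<open>a < c\<close>] by blast
  have "0 \<le> q"
  proof -
    have "0 \<le> real_of_rat q"
      using a q by linarith
    then show ?thesis by simp
  qed
  have "S a \<omega> \<le> S (real_of_rat q) \<omega>"
    by (rule mono_onD[OF mono]) (use a q \<open>0 \<le> q\<close> in auto)
  with a(2) have "t < S (real_of_rat q) \<omega>"
    by linarith
  with \<open>0 \<le> q\<close> q(2) show "\<exists>q::rat. 0 \<le> q \<and> real_of_rat q < c \<and> t < S (real_of_rat q) \<omega>"
    by blast
next
  assume "\<exists>q::rat. 0 \<le> q \<and> real_of_rat q < c \<and> t < S (real_of_rat q) \<omega>"
  then obtain q :: rat where q: "0 \<le> q" "real_of_rat q < c" "t < S (real_of_rat q) \<omega>"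
    by blast
  have "inv_hitting S t \<omega> \<le> real_of_rat q"
    by (rule inv_hitting_le) (use q in auto)
  with q(2) show "inv_hitting S t \<omega> < c"
    by simp
qed

text \<open>On paths that never exceed \<open>t\<close> the infimum defining \<^const>\<open>inv_hitting\<close> is taken over
  the empty set, so its value there is the junk value \<open>Inf {}\<close>.\<close>

lemma stable_subordinator_inv_hitting_less_iff:
  assumes S: "stable_subordinator N \<alpha> S" and "\<omega> \<in> space N"
  shows "inv_hitting S t \<omega> < c \<longleftrightarrow> ((\<forall>j::nat. S (real j) \<omega> \<le> t) \<and> Inf {} < c) \<or>
    (\<exists>q::rat. 0 \<le> q \<and> real_of_rat q < c \<and> t < S (real_of_rat q) \<omega>)"
proof -
  note mono = stable_subordinator_mono[OF S \<open>\<omega> \<in> space N\<close>]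
  have exceeds_nat: "\<exists>j::nat. t < S (real j) \<omega>" if "0 \<le> x" "t < S x \<omega>" for x
  proof -
    have "S x \<omega> \<le> S (real (nat \<lceil>x\<rceil>)) \<omega>"
      by (rule mono_onD[OF mono]) (use that(1) real_nat_ceiling_ge in auto)
    with that(2) show ?thesis
      by (intro exI[of _ "nat \<lceil>x\<rceil>"]) simp
  qed
  show ?thesis
  proof (cases "\<exists>j::nat. t < S (real j) \<omega>")
    case True
    then obtain j :: nat where "t < S (real j) \<omega>" ..
    then have "\<not> (\<forall>j::nat. S (real j) \<omega> \<le> t)"
      by (auto simp: not_le)
    with inv_hitting_less_iff[where S=S and \<omega>=\<omega> and x="real j",
        OF mono of_nat_0_le_iff \<open>t < S (real j) \<omega>\<close>]
    show ?thesis
      by blast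
  next
    case False
    then have empty: "{x. 0 \<le> x \<and> t < S x \<omega>} = {}"
      using exceeds_nat by blast
    then have "\<not> (\<exists>q::rat. 0 \<le> q \<and> real_of_rat q < c \<and> t < S (real_of_rat q) \<omega>)"
      by auto
    with False show ?thesis
      unfolding inv_hitting_def empty by (auto simp: not_less)
  qed
qed

lemma stable_subordinator_inv_hitting_measurable:
  assumes S: "stable_subordinator N \<alpha> S"
  shows "inv_hitting S t \<in> borel_measurable N"
  unfolding borel_measurable_iff_less
proof
  fix c :: real
  have [measurable]: "S (real j) \<in> borel_measurable N" for j :: nat
    using stable_subordinator_measurable[OF S] by simp
  define Q where "Q = {q::rat. 0 \<le> q \<and> real_of_rat q < c}"
  have "{\<omega>\<in>space N. inv_hitting S t \<omega> < c} =
      {\<omega>\<in>space N. (\<forall>j::nat. S (real j) \<omega> \<le> t) \<and> Inf {} < c} \<union>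
      (\<Union>q\<in>Q. {\<omega>\<in>space N. t < S (real_of_rat q) \<omega>})"
    using stable_subordinator_inv_hitting_less_iff[OF S] by (auto simp: Q_def)
  also have "\<dots> \<in> sets N"
  proof (intro sets.Un sets.countable_UN'')
    show "{\<omega>\<in>space N. (\<forall>j::nat. S (real j) \<omega> \<le> t) \<and> Inf {} < c} \<in> sets N"
      by measurable
    show "{\<omega>\<in>space N. t < S (real_of_rat q) \<omega>} \<in> sets N" if "q \<in> Q" for q
      using stable_subordinator_measurable[OF S, of "real_of_rat q"] that by (simp add: Q_def)
  qed (rule countableI_type)
  finally show "{\<omega>\<in>space N. inv_hitting S t \<omega> < c} \<in> sets N" .
qed

lemma stable_subordinator_inv_hitting_cdf_bounds:
  assumes S: "stable_subordinator N \<alpha> S" and "0 \<le> y"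
  shows "measure N {\<omega>\<in>space N. t < S y \<omega>} \<le> measure N {\<omega>\<in>space N. inv_hitting S t \<omega> \<le> y}"
    and "measure N {\<omega>\<in>space N. inv_hitting S t \<omega> \<le> y} \<le> measure N {\<omega>\<in>space N. t \<le> S y \<omega>}"
proof -
  interpret prob_space N
    using S by (rule stable_subordinator_prob_space)
  have [measurable]: "inv_hitting S t \<in> borel_measurable N" "S y \<in> borel_measurable N"
    using stable_subordinator_inv_hitting_measurable[OF S] stable_subordinator_measurable[OF S]
      \<open>0 \<le> y\<close>
    by simp_all
  show "measure N {\<omega>\<in>space N. t < S y \<omega>} \<le> measure N {\<omega>\<in>space N. inv_hitting S t \<omega> \<le> y}"
    using inv_hitting_le[OF \<open>0 \<le> y\<close>] by (intro finite_measure_mono) auto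
  have "AE \<omega> in N. \<omega> \<in> {\<omega>\<in>space N. inv_hitting S t \<omega> \<le> y} \<longrightarrow> \<omega> \<in> {\<omega>\<in>space N. t \<le> S y \<omega>}"
    using stable_subordinator_AE_exceeds[OF S, of t]
  proof eventually_elim
    case (elim \<omega>)
    then obtain j :: nat where j: "t < S (real j) \<omega>" ..
    show ?case
    proof
      assume "\<omega> \<in> {\<omega>\<in>space N. inv_hitting S t \<omega> \<le> y}"
      then have "\<omega> \<in> space N" "inv_hitting S t \<omega> \<le> y"
        by auto
      then have "t \<le> S y \<omega>"
        using stable_subordinator_mono[OF S] stable_subordinator_right_cont[OF S] \<open>0 \<le> y\<close> j
        by (intro le_tail_if_inv_hitting_le[where S=S and \<omega>=\<omega> and x="real j"]) auto
      with \<open>\<omega> \<in> space N\<close> show "\<omega> \<in> {\<omega>\<in>space N. t \<le> S y \<omega>}"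
        by simp
    qed
  qed
  then show "measure N {\<omega>\<in>space N. inv_hitting S t \<omega> \<le> y} \<le> measure N {\<omega>\<in>space N. t \<le> S y \<omega>}"
    by (rule finite_measure_mono_AE) measurable
qed

lemma stable_subordinator_inv_hitting_cdf_neg:
  assumes S: "stable_subordinator N \<alpha> S" and "y < 0"
  shows "measure N {\<omega>\<in>space N. inv_hitting S t \<omega> \<le> y} = 0"
proof -
  interpret prob_space N
    using S by (rule stable_subordinator_prob_space)
  have "AE \<omega> in N. \<omega> \<in> {\<omega>\<in>space N. inv_hitting S t \<omega> \<le> y} \<longrightarrow> \<omega> \<in> {}"
    using stable_subordinator_AE_exceeds[OF S, of t]
  proof eventually_elim
    case (elim \<omega>)
    then obtain j :: nat where "t < S (real j) \<omega>" ..
    then have "0 \<le> inv_hitting S t \<omega>"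
      by (intro inv_hitting_nonneg[of "real j"]) auto
    with \<open>y < 0\<close> show ?case by auto
  qed
  then have "measure N {\<omega>\<in>space N. inv_hitting S t \<omega> \<le> y} \<le> measure N {}"
    by (rule finite_measure_mono_AE) simp
  then show ?thesis
    by (simp add: measure_le_0_iff)
qed

lemma stable_subordinator_tail_ge_le_inv_hitting_cdf:
  assumes S: "stable_subordinator N \<alpha> S" and "0 < \<alpha>" "0 < t" "0 \<le> x"
  shows "measure N {\<omega>\<in>space N. t \<le> S x \<omega>} \<le> cdf (distr N borel (inv_hitting S t)) x"
proof -
  define F where "F = distr N borel (inv_hitting S t)"
  interpret F: real_distribution F
    unfolding F_def
    using stable_subordinator_prob_space[OF S] stable_subordinator_inv_hitting_measurable[OF S]
    by (simp add: prob_space.real_distribution_distr)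
  have "measure N {\<omega>\<in>space N. t \<le> S x \<omega>} \<le> cdf F x"
  proof (rule tendsto_lowerbound)
    show "(cdf F \<longlongrightarrow> cdf F x) (at_right x)"
      using F.cdf_is_right_cont by (simp add: continuous_within)
    show "\<forall>\<^sub>F y in at_right x. measure N {\<omega>\<in>space N. t \<le> S x \<omega>} \<le> cdf F y"
      using eventually_at_right_less[of x]
    proof eventually_elim
      case (elim y)
      have "measure N {\<omega>\<in>space N. t \<le> S x \<omega>} \<le> measure N {\<omega>\<in>space N. t < S y \<omega>}"
        using stable_subordinator_tail_le[OF S] assms elim by simp
      also have "\<dots> \<le> cdf F y"
        using stable_subordinator_inv_hitting_cdf_bounds(1)[OF S, of y t] assms elim
        by (simp add: F_def cdf_distr stable_subordinator_inv_hitting_measurable[OF S])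
      finally show ?case .
    qed
  qed simp
  then show ?thesis
    by (simp add: F_def)
qed

lemma stable_subordinator_inv_hitting_cdf_le_tail_gt:
  assumes S: "stable_subordinator N \<alpha> S" and "0 < \<alpha>" "0 < t" "0 \<le> x"
    and cont: "continuous (at_left x) (cdf (distr N borel (inv_hitting S t)))"
  shows "cdf (distr N borel (inv_hitting S t)) x \<le> measure N {\<omega>\<in>space N. t < S x \<omega>}"
proof -
  define G where "G = cdf (distr N borel (inv_hitting S t))"
  have G_le: "G y \<le> measure N {\<omega>\<in>space N. t \<le> S y \<omega>}" if "0 \<le> y" for y
    using stable_subordinator_inv_hitting_cdf_bounds(2)[OF S that]
    by (simp add: G_def cdf_distr stable_subordinator_inv_hitting_measurable[OF S])
  have "G x \<le> measure N {\<omega>\<in>space N. t < S x \<omega>}"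
  proof (cases "x = 0")
    case True
    then have "{\<omega>\<in>space N. t \<le> S x \<omega>} = {}"
      using stable_subordinator_zero[OF S] \<open>0 < t\<close> by auto
    with G_le[OF \<open>0 \<le> x\<close>] show ?thesis
      by (metis measure_empty measure_nonneg order_trans)
  next
    case False
    with \<open>0 \<le> x\<close> have "0 < x" by simp
    show ?thesis
    proof (rule tendsto_upperbound)
      show "(G \<longlongrightarrow> G x) (at_left x)"
        using cont by (simp add: G_def continuous_within)
      show "\<forall>\<^sub>F y in at_left x. G y \<le> measure N {\<omega>\<in>space N. t < S x \<omega>}"
        using eventually_at_left_real[OF \<open>0 < x\<close>]
      proof eventually_elim
        case (elim y)
        then have "G y \<le> measure N {\<omega>\<in>space N. t \<le> S y \<omega>}"
          by (intro G_le) simp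
        also have "\<dots> \<le> measure N {\<omega>\<in>space N. t < S x \<omega>}"
          using stable_subordinator_tail_le[OF S] assms elim by simp
        finally show ?case .
      qed
    qed simp
  qed
  then show ?thesis
    by (simp add: G_def)
qed

lemma stable_subordinator_inv_hitting_cdf_isCont:
  assumes S: "stable_subordinator N \<alpha> S" and "0 < \<alpha>" "0 < t" "0 \<le> x"
    and cont: "isCont (cdf (distr N borel (inv_hitting S t))) x"
  shows "cdf (distr N borel (inv_hitting S t)) x = measure N {\<omega>\<in>space N. t < S x \<omega>}"
    and "measure N {\<omega>\<in>space N. S x \<omega> = t} = 0"
proof -
  interpret prob_space N
    using S by (rule stable_subordinator_prob_space)
  have [measurable]: "S x \<in> borel_measurable N"
    using stable_subordinator_measurable[OF S] \<open>0 \<le> x\<close> by simp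
  have "measure N {\<omega>\<in>space N. t < S x \<omega>} \<le> measure N {\<omega>\<in>space N. t \<le> S x \<omega>}"
    by (intro finite_measure_mono) auto
  with stable_subordinator_tail_ge_le_inv_hitting_cdf[OF assms(1-4)]
    stable_subordinator_inv_hitting_cdf_le_tail_gt[OF assms(1-4)] cont
  have "cdf (distr N borel (inv_hitting S t)) x = measure N {\<omega>\<in>space N. t < S x \<omega>}"
    and tails_eq: "measure N {\<omega>\<in>space N. t \<le> S x \<omega>} = measure N {\<omega>\<in>space N. t < S x \<omega>}"
    by (simp_all add: continuous_at_split)
  then show "cdf (distr N borel (inv_hitting S t)) x = measure N {\<omega>\<in>space N. t < S x \<omega>}"
    by simp
  have "{\<omega>\<in>space N. S x \<omega> = t} = {\<omega>\<in>space N. t \<le> S x \<omega>} - {\<omega>\<in>space N. t < S x \<omega>}"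
    by auto
  then show "measure N {\<omega>\<in>space N. S x \<omega> = t} = 0"
    using tails_eq by (simp add: finite_measure_Diff subset_eq)
qed

section \<open>The Sibuya counting process\<close>

lemma integral_nat_valued_sums:
  fixes Z :: "'a \<Rightarrow> nat" and g :: "nat \<Rightarrow> real"
  assumes M: "prob_space M" and Z: "Z \<in> measurable M (count_space UNIV)"
    and bounded: "\<And>k. \<bar>g k\<bar> \<le> B"
  shows "(\<lambda>k. g k * measure M {\<omega>\<in>space M. Z \<omega> = k}) sums (\<integral>\<omega>. g (Z \<omega>) \<partial>M)"
proof -
  interpret prob_space M by fact
  define E where "E k = {\<omega>\<in>space M. Z \<omega> = k}" for k
  have E_sets: "E k \<in> sets M" for k
    unfolding E_def using Z by measurable
  define f where "f k \<omega> = g k * indicator (E k) \<omega>" for k \<omega>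
  have "(\<lambda>k. \<integral>\<omega>. f k \<omega> \<partial>M) sums (\<integral>\<omega>. (\<Sum>k. f k \<omega>) \<partial>M)"
  proof (rule sums_integral)
    show "integrable M (f k)" for k
      unfolding f_def using E_sets by (intro integrable_mult_right integrable_real_indicator)
         (simp_all add: emeasure_eq_measure)
    show "AE \<omega> in M. summable (\<lambda>k. norm (f k \<omega>))"
    proof (rule AE_I2)
      show "summable (\<lambda>k. norm (f k \<omega>))" for \<omega>
        by (rule summable_finite[of "{Z \<omega>}"]) (auto simp: f_def E_def)
    qed
    have "(\<lambda>k. measure M (E k)) sums measure M (\<Union>k. E k)"
      using E_sets by (intro finite_measure_UNION) (auto simp: disjoint_family_on_def E_def)
    then have "summable (\<lambda>k. B * measure M (E k))"
      by (intro summable_mult) (rule sums_summable)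
    then show "summable (\<lambda>k. \<integral>\<omega>. norm (f k \<omega>) \<partial>M)"
      unfolding f_def using E_sets bounded
      by (elim summable_comparison_test') (simp add: abs_mult mult_right_mono)
  qed
  moreover have "(\<Sum>k. f k \<omega>) = g (Z \<omega>)" if "\<omega> \<in> space M" for \<omega>
    using that suminf_finite[of "{Z \<omega>}" "\<lambda>k. f k \<omega>"] by (simp add: f_def E_def)
  then have "(\<integral>\<omega>. (\<Sum>k. f k \<omega>) \<partial>M) = (\<integral>\<omega>. g (Z \<omega>) \<partial>M)"
    by (intro Bochner_Integration.integral_cong) auto
  ultimately show ?thesis
    unfolding f_def E_def using E_sets[unfolded E_def] by simp
qed

lemma sibuya_laplace_with_atom:
  fixes Z :: "'a \<Rightarrow> nat"
  assumes M: "prob_space M" and Z: "Z \<in> measurable M (count_space UNIV)"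
    and law: "\<And>k. 1 \<le> k \<Longrightarrow> measure M {\<omega>\<in>space M. Z \<omega> = k} = sibuya_pmf \<alpha> k"
    and "0 < s"
  shows "(\<integral>\<omega>. exp (- s * real (Z \<omega>)) \<partial>M) =
    measure M {\<omega>\<in>space M. Z \<omega> = 0} + 1 - (1 - exp (- s)) powr \<alpha>"
proof -
  define q where "q k = measure M {\<omega>\<in>space M. Z \<omega> = k}" for k
  have "(\<lambda>k. exp (- s * real k) * q k) sums (\<integral>\<omega>. exp (- s * real (Z \<omega>)) \<partial>M)"
    unfolding q_def by (rule integral_nat_valued_sums[OF M Z, where B=1]) (use \<open>0 < s\<close> in simp)
  moreover have "(\<lambda>k. exp (- s * real k) * q k) sums (q 0 + 1 - (1 - exp (- s)) powr \<alpha>)"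
  proof -
    have "(\<lambda>k. (\<alpha> gchoose k) * (- exp (- s)) ^ k) sums (1 - exp (- s)) powr \<alpha>"
      using gen_binomial_real[of "- exp (- s)" \<alpha>] \<open>0 < s\<close> by simp
    with sums_single[of 0 "\<lambda>_. q 0 + 1"]
    have "(\<lambda>k. (if k = 0 then q 0 + 1 else 0) - (\<alpha> gchoose k) * (- exp (- s)) ^ k)
        sums (q 0 + 1 - (1 - exp (- s)) powr \<alpha>)"
      by (intro sums_diff) simp_all
    moreover have "exp (- s * real k) * q k =
        (if k = 0 then q 0 + 1 else 0) - (\<alpha> gchoose k) * (- exp (- s)) ^ k" for k
    proof (cases k)
      case (Suc j)
      have "exp (- s * real k) = exp (- s) ^ k"
        by (simp flip: exp_of_nat_mult add: mult.commute)
      with Suc show ?thesis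
        using law[of k] by (simp add: q_def sibuya_pmf_def power_minus[of "exp (- s)"])
    qed simp
    ultimately show ?thesis
      by simp
  qed
  ultimately show ?thesis
    unfolding q_def by (rule sums_unique2)
qed

lemma sibuya_atom_zero:
  fixes Z :: "'a \<Rightarrow> nat"
  assumes M: "prob_space M" and Z: "Z \<in> measurable M (count_space UNIV)"
    and law: "\<And>k. 1 \<le> k \<Longrightarrow> measure M {\<omega>\<in>space M. Z \<omega> = k} = sibuya_pmf \<alpha> k"
    and "0 < \<alpha>"
  shows "measure M {\<omega>\<in>space M. Z \<omega> = 0} = 0"
proof -
  interpret prob_space M by fact
  have "measure M {\<omega>\<in>space M. Z \<omega> = 0} \<le> (1 - exp (- s)) powr \<alpha>" if "0 < s" for s
  proof -
    have "(\<integral>\<omega>. exp (- s * real (Z \<omega>)) \<partial>M) \<le> 1"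
      using Z that by (intro integral_le_const integrable_const_bound[where B=1]) auto
    then show ?thesis
      using sibuya_laplace_with_atom[OF M Z law that] by simp
  qed
  then have "\<forall>\<^sub>F s in at_right 0. measure M {\<omega>\<in>space M. Z \<omega> = 0} \<le> (1 - exp (- s)) powr \<alpha>"
    using eventually_at_right_less by (rule eventually_mono[rotated])
  moreover have "((\<lambda>s. (1 - exp (- s)) powr \<alpha>) \<longlongrightarrow> 0) (at_right 0)"
    using \<open>0 < \<alpha>\<close> by real_asymp
  ultimately have "measure M {\<omega>\<in>space M. Z \<omega> = 0} \<le> 0"
    by (intro tendsto_lowerbound[where F="at_right 0"]) auto
  then show ?thesis
    by (simp add: measure_le_0_iff)
qed

lemma sibuya_laplace:
  fixes Z :: "'a \<Rightarrow> nat"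
  assumes M: "prob_space M" and Z: "Z \<in> measurable M (count_space UNIV)"
    and law: "\<And>k. 1 \<le> k \<Longrightarrow> measure M {\<omega>\<in>space M. Z \<omega> = k} = sibuya_pmf \<alpha> k"
    and "0 < \<alpha>" "0 \<le> s"
  shows "(\<integral>\<omega>. exp (- s * real (Z \<omega>)) \<partial>M) = 1 - (1 - exp (- s)) powr \<alpha>"
proof (cases "s = 0")
  case True
  then show ?thesis
    using prob_space.prob_space[OF M] by simp
next
  case False
  then show ?thesis
    using sibuya_laplace_with_atom[OF M Z law] sibuya_atom_zero[OF M Z law \<open>0 < \<alpha>\<close>] \<open>0 \<le> s\<close>
    by simp
qed

lemma (in prob_space) laplace_sibuya_sum:
  fixes Z :: "nat \<Rightarrow> 'a \<Rightarrow> nat"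
  assumes indep: "indep_vars (\<lambda>_. count_space UNIV) Z {1..}" and "0 \<le> s"
  shows "(\<integral>\<omega>. exp (- s * real (sibuya_sum Z k \<omega>)) \<partial>M) =
    (\<Prod>i\<in>{1..k}. \<integral>\<omega>. exp (- s * real (Z i \<omega>)) \<partial>M)"
proof -
  have Z: "Z i \<in> measurable M (count_space UNIV)" if "i \<in> {1..k}" for i
    using indep that unfolding indep_vars_def by auto
  have "indep_vars (\<lambda>_. borel) (\<lambda>i \<omega>. exp (- s * real (Z i \<omega>))) {1..k}"
    using indep_vars_subset[OF indep]
    by (rule indep_vars_compose2[where M'="\<lambda>_. count_space UNIV"]) auto
  moreover have "integrable M (\<lambda>\<omega>. exp (- s * real (Z i \<omega>)))" if "i \<in> {1..k}" for i
    using Z[OF that] \<open>0 \<le> s\<close> by (intro integrable_const_bound[where B=1]) auto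
  ultimately have "(\<integral>\<omega>. (\<Prod>i\<in>{1..k}. exp (- s * real (Z i \<omega>))) \<partial>M) =
      (\<Prod>i\<in>{1..k}. \<integral>\<omega>. exp (- s * real (Z i \<omega>)) \<partial>M)"
    by (intro indep_vars_lebesgue_integral) auto
  then show ?thesis
    by (simp add: sibuya_sum_def exp_sum sum_distrib_left)
qed

lemma floor_powr_ratio_tendsto:
  fixes \<alpha> x :: real
  assumes "0 < \<alpha>" "0 \<le> x"
  shows "(\<lambda>n. real (nat \<lfloor>x * real n powr \<alpha>\<rfloor> + 1) / real n powr \<alpha>) \<longlonglongrightarrow> x"
proof (rule tendsto_sandwich)
  define k where "k n = nat \<lfloor>x * real n powr \<alpha>\<rfloor> + 1" for n
  have k_bounds: "x * real n powr \<alpha> \<le> real (k n)" "real (k n) \<le> x * real n powr \<alpha> + 1" for n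
  proof -
    have "real (k n) = of_int \<lfloor>x * real n powr \<alpha>\<rfloor> + 1"
      unfolding k_def using \<open>0 \<le> x\<close> by simp
    with floor_correct[of "x * real n powr \<alpha>"]
    show "x * real n powr \<alpha> \<le> real (k n)" "real (k n) \<le> x * real n powr \<alpha> + 1"
      by linarith+
  qed
  show "\<forall>\<^sub>F n in sequentially. x \<le> real (k n) / real n powr \<alpha>"
    using eventually_ge_at_top[of 1]
    by eventually_elim (use k_bounds in \<open>simp add: field_simps\<close>)
  show "\<forall>\<^sub>F n in sequentially. real (k n) / real n powr \<alpha> \<le> x + 1 / real n powr \<alpha>"
    using eventually_ge_at_top[of 1]
    by eventually_elim (use k_bounds in \<open>simp add: field_simps\<close>)
  have "((\<lambda>n::real. x + 1 / n powr \<alpha>) \<longlongrightarrow> x) at_top"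
    using assms by real_asymp
  then show "(\<lambda>n. x + 1 / real n powr \<alpha>) \<longlonglongrightarrow> x"
    by (rule filterlim_compose[OF _ filterlim_real_sequentially])
qed simp

lemma sibuya_laplace_power_limit:
  fixes \<alpha> \<xi> x :: real
  assumes "0 < \<alpha>" "0 < \<xi>" "0 \<le> x"
  shows "(\<lambda>n. (1 - (1 - exp (- \<xi> / real n)) powr \<alpha>) ^ (nat \<lfloor>x * real n powr \<alpha>\<rfloor> + 1))
    \<longlonglongrightarrow> exp (- x * \<xi> powr \<alpha>)"
proof -
  define b where "b n = 1 - (1 - exp (- \<xi> / real n)) powr \<alpha>" for n
  define k where "k n = nat \<lfloor>x * real n powr \<alpha>\<rfloor> + 1" for n
  have "((\<lambda>n::real. n powr \<alpha> * ln (1 - (1 - exp (- \<xi> / n)) powr \<alpha>)) \<longlongrightarrow> - (\<xi> powr \<alpha>)) at_top"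
    using assms by real_asymp
  then have "(\<lambda>n. real n powr \<alpha> * ln (b n)) \<longlonglongrightarrow> - (\<xi> powr \<alpha>)"
    unfolding b_def by (rule filterlim_compose[OF _ filterlim_real_sequentially])
  with floor_powr_ratio_tendsto[OF \<open>0 < \<alpha>\<close> \<open>0 \<le> x\<close>]
  have "(\<lambda>n. exp (real (k n) / real n powr \<alpha> * (real n powr \<alpha> * ln (b n))))
      \<longlonglongrightarrow> exp (x * - (\<xi> powr \<alpha>))"
    unfolding k_def by (intro tendsto_intros)
  moreover have "\<forall>\<^sub>F n in sequentially.
      exp (real (k n) / real n powr \<alpha> * (real n powr \<alpha> * ln (b n))) = b n ^ k n"
    using eventually_ge_at_top[of 1]
  proof eventually_elim
    case (elim n)
    have "(1 - exp (- \<xi> / real n)) powr \<alpha> < 1 powr \<alpha>"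
      using elim assms by (intro powr_less_mono2) auto
    then have "0 < b n"
      unfolding b_def by simp
    with elim show ?case
      by (simp add: exp_of_nat_mult)
  qed
  ultimately show ?thesis
    unfolding b_def k_def by (simp add: tendsto_cong)
qed

lemma sibuya_sum_mono:
  assumes "k \<le> k'"
  shows "sibuya_sum Z k \<omega> \<le> sibuya_sum Z k' \<omega>"
  unfolding sibuya_sum_def using assms by (intro sum_mono2) auto

lemma sibuya_sum_ge:
  assumes "\<And>j. 1 \<le> j \<Longrightarrow> Z j \<omega> \<noteq> 0"
  shows "k \<le> sibuya_sum Z k \<omega>"
proof -
  have "(\<Sum>j\<in>{1..k}. 1) \<le> sibuya_sum Z k \<omega>"
    unfolding sibuya_sum_def using assms by (intro sum_mono) (auto simp: Suc_le_eq)
  then show ?thesis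
    by simp
qed

lemma sibuya_count_less_iff:
  assumes "\<And>j. 1 \<le> j \<Longrightarrow> Z j \<omega> \<noteq> 0"
  shows "sibuya_count Z m \<omega> < K \<longleftrightarrow> m < sibuya_sum Z K \<omega>"
proof -
  define A where "A = {n. sibuya_sum Z n \<omega> \<le> m}"
  have "A \<subseteq> {..m}"
    unfolding A_def using sibuya_sum_ge[of Z \<omega>, OF assms] by (auto intro: order_trans)
  then have "finite A"
    by (rule finite_subset) simp
  moreover have "0 \<in> A"
    by (simp add: A_def sibuya_sum_def)
  ultimately have "sibuya_count Z m \<omega> < K \<longleftrightarrow> (\<forall>n. sibuya_sum Z n \<omega> \<le> m \<longrightarrow> n < K)"
    unfolding sibuya_count_def A_def[symmetric] by (subst Max_less_iff) (auto simp: A_def)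
  also have "\<dots> \<longleftrightarrow> m < sibuya_sum Z K \<omega>"
    using sibuya_sum_mono[of K _ Z \<omega>] by (meson le_trans not_le order.irrefl)
  finally show ?thesis .
qed

definition sibuya_rescaled_count :: "(nat \<Rightarrow> 'a \<Rightarrow> nat) \<Rightarrow> real \<Rightarrow> real \<Rightarrow> nat \<Rightarrow> 'a \<Rightarrow> real" where
  "sibuya_rescaled_count Z \<alpha> t n \<omega> = real n powr (- \<alpha>) * real (sibuya_count Z (nat \<lfloor>real n * t\<rfloor>) \<omega>)"

definition sibuya_rescaled_sum :: "(nat \<Rightarrow> 'a \<Rightarrow> nat) \<Rightarrow> real \<Rightarrow> real \<Rightarrow> nat \<Rightarrow> 'a \<Rightarrow> real" where
  "sibuya_rescaled_sum Z \<alpha> x n \<omega> = real (sibuya_sum Z (nat \<lfloor>x * real n powr \<alpha>\<rfloor> + 1) \<omega>) / real n"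

lemma sibuya_count_rescaled_le_iff:
  assumes "\<And>j. 1 \<le> j \<Longrightarrow> Z j \<omega> \<noteq> 0" and "1 \<le> n" "0 \<le> x" "0 \<le> t"
  shows "sibuya_rescaled_count Z \<alpha> t n \<omega> \<le> x \<longleftrightarrow> t < sibuya_rescaled_sum Z \<alpha> x n \<omega>"
proof -
  define K where "K = nat \<lfloor>x * real n powr \<alpha>\<rfloor> + 1"
  have "0 < real n powr \<alpha>"
    using \<open>1 \<le> n\<close> by simp
  then have "sibuya_rescaled_count Z \<alpha> t n \<omega> \<le> x \<longleftrightarrow>
      real (sibuya_count Z (nat \<lfloor>real n * t\<rfloor>) \<omega>) \<le> x * real n powr \<alpha>"
    by (simp add: sibuya_rescaled_count_def powr_minus_divide field_simps)
  also have "\<dots> \<longleftrightarrow> sibuya_count Z (nat \<lfloor>real n * t\<rfloor>) \<omega> < K"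
  proof -
    have "0 \<le> \<lfloor>x * real n powr \<alpha>\<rfloor>"
      using \<open>0 < real n powr \<alpha>\<close> \<open>0 \<le> x\<close> by simp
    then show ?thesis
      unfolding K_def by (simp add: less_Suc_eq_le le_nat_iff le_floor_iff)
  qed
  also have "\<dots> \<longleftrightarrow> nat \<lfloor>real n * t\<rfloor> < sibuya_sum Z K \<omega>"
    using assms(1) by (rule sibuya_count_less_iff)
  also have "\<dots> \<longleftrightarrow> real n * t < real (sibuya_sum Z K \<omega>)"
    using \<open>0 \<le> t\<close> by (simp add: nat_less_iff floor_less_iff)
  also have "\<dots> \<longleftrightarrow> t < sibuya_rescaled_sum Z \<alpha> x n \<omega>"
    unfolding sibuya_rescaled_sum_def K_def using \<open>1 \<le> n\<close> by (simp add: field_simps)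
  finally show ?thesis .
qed

locale sibuya_process = prob_space M for M :: "'a measure" +
  fixes \<alpha> :: real and Z :: "nat \<Rightarrow> 'a \<Rightarrow> nat"
  assumes alpha_pos: "0 < \<alpha>"
    and indep: "indep_vars (\<lambda>_. count_space UNIV) Z {1..}"
    and sibuya_law: "\<And>i k. 1 \<le> i \<Longrightarrow> 1 \<le> k \<Longrightarrow> measure M {\<omega>\<in>space M. Z i \<omega> = k} = sibuya_pmf \<alpha> k"
begin

lemma measurable_Z: "1 \<le> i \<Longrightarrow> Z i \<in> measurable M (count_space UNIV)"
  using indep unfolding indep_vars_def by auto

lemma AE_Z_nonzero: "AE \<omega> in M. \<forall>j\<ge>1. Z j \<omega> \<noteq> 0"
proof -
  have "AE \<omega> in M. Z j \<omega> \<noteq> 0" if "1 \<le> j" for j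
  proof -
    have [measurable]: "Z j \<in> measurable M (count_space UNIV)"
      using that by (rule measurable_Z)
    have "measure M {\<omega>\<in>space M. Z j \<omega> = 0} = 0"
      using sibuya_atom_zero[OF prob_space_axioms _ sibuya_law[OF that] alpha_pos] by simp
    then show ?thesis
      by (subst AE_iff_measurable[where N="{\<omega>\<in>space M. Z j \<omega> = 0}"])
         (auto simp: emeasure_eq_measure)
  qed
  then show ?thesis
    by (subst AE_all_countable) auto
qed

lemma measurable_sibuya_sum: "(\<lambda>\<omega>. real (sibuya_sum Z k \<omega>)) \<in> borel_measurable M"
proof -
  have "(\<lambda>\<omega>. \<Sum>j\<in>{1..k}. real (Z j \<omega>)) \<in> borel_measurable M"
  proof (rule borel_measurable_sum)
    fix j assume "j \<in> {1..k}"
    then have [measurable]: "Z j \<in> measurable M (count_space UNIV)"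
      by (intro measurable_Z) simp
    show "(\<lambda>\<omega>. real (Z j \<omega>)) \<in> borel_measurable M"
      by measurable
  qed
  then show ?thesis
    by (simp add: sibuya_sum_def)
qed

lemma measurable_sibuya_count: "sibuya_count Z m \<in> measurable M (count_space UNIV)"
  unfolding sibuya_count_def
proof (rule measurable_Max_nat)
  fix n
  have [measurable]: "(\<lambda>\<omega>. real (sibuya_sum Z n \<omega>)) \<in> borel_measurable M"
    by (rule measurable_sibuya_sum)
  have "{\<omega>\<in>space M. real (sibuya_sum Z n \<omega>) \<le> real m} \<in> sets M"
    by measurable
  then show "Measurable.pred M (\<lambda>\<omega>. sibuya_sum Z n \<omega> \<le> m)"
    by (simp add: pred_def)
qed

lemma laplace_sibuya_sum_eq:
  assumes "0 \<le> s"
  shows "(\<integral>\<omega>. exp (- s * real (sibuya_sum Z k \<omega>)) \<partial>M) = (1 - (1 - exp (- s)) powr \<alpha>) ^ k"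
  using laplace_sibuya_sum[OF indep assms]
    sibuya_laplace[OF prob_space_axioms measurable_Z sibuya_law alpha_pos assms] by simp

lemma sibuya_rescaled_sum_laplace_limit:
  assumes "0 \<le> x"
  shows "(\<lambda>n. \<integral>\<omega>. exp (- real m * sibuya_rescaled_sum Z \<alpha> x n \<omega>) \<partial>M) \<longlonglongrightarrow> exp (- x * real m powr \<alpha>)"
proof (cases "m = 0")
  case True
  then show ?thesis
    by (simp add: prob_space)
next
  case False
  have "\<forall>\<^sub>F n in sequentially.
      (1 - (1 - exp (- real m / real n)) powr \<alpha>) ^ (nat \<lfloor>x * real n powr \<alpha>\<rfloor> + 1) =
      (\<integral>\<omega>. exp (- real m * sibuya_rescaled_sum Z \<alpha> x n \<omega>) \<partial>M)"
    using eventually_ge_at_top[of 1]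
  proof eventually_elim
    case (elim n)
    have "(\<integral>\<omega>. exp (- real m * sibuya_rescaled_sum Z \<alpha> x n \<omega>) \<partial>M) =
        (\<integral>\<omega>. exp (- (real m / real n) * real (sibuya_sum Z (nat \<lfloor>x * real n powr \<alpha>\<rfloor> + 1) \<omega>)) \<partial>M)"
      by (simp add: sibuya_rescaled_sum_def)
    also have "\<dots> = (1 - (1 - exp (- real m / real n)) powr \<alpha>) ^ (nat \<lfloor>x * real n powr \<alpha>\<rfloor> + 1)"
      by (subst laplace_sibuya_sum_eq) auto
    finally show ?case ..
  qed
  with sibuya_laplace_power_limit[OF alpha_pos _ assms, of "real m"] False show ?thesis
    by (simp add: tendsto_cong)
qed

lemma sibuya_count_cdf_eq_rescaled_tail:
  assumes "1 \<le> n" "0 \<le> x" "0 \<le> t"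
  shows "measure M {\<omega>\<in>space M. sibuya_rescaled_count Z \<alpha> t n \<omega> \<le> x} =
    measure M {\<omega>\<in>space M. t < sibuya_rescaled_sum Z \<alpha> x n \<omega>}"
proof (rule measure_eq_AE)
  have [measurable]: "sibuya_count Z m \<in> measurable M (count_space UNIV)"
    "(\<lambda>\<omega>. real (sibuya_sum Z k \<omega>)) \<in> borel_measurable M" for m k
    by (rule measurable_sibuya_count measurable_sibuya_sum)+
  show "{\<omega>\<in>space M. sibuya_rescaled_count Z \<alpha> t n \<omega> \<le> x} \<in> sets M"
    "{\<omega>\<in>space M. t < sibuya_rescaled_sum Z \<alpha> x n \<omega>} \<in> sets M"
    unfolding sibuya_rescaled_count_def sibuya_rescaled_sum_def by measurable
  show "AE \<omega> in M. \<omega> \<in> {\<omega>\<in>space M. sibuya_rescaled_count Z \<alpha> t n \<omega> \<le> x} \<longleftrightarrow>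
      \<omega> \<in> {\<omega>\<in>space M. t < sibuya_rescaled_sum Z \<alpha> x n \<omega>}"
    using AE_Z_nonzero
  proof eventually_elim
    case (elim \<omega>)
    then have "sibuya_rescaled_count Z \<alpha> t n \<omega> \<le> x \<longleftrightarrow> t < sibuya_rescaled_sum Z \<alpha> x n \<omega>"
      using assms by (intro sibuya_count_rescaled_le_iff) auto
    then show ?case
      by auto
  qed
qed

lemma sibuya_count_cdf_limit:
  assumes S: "stable_subordinator N \<alpha> S" and "0 < t" "0 \<le> x"
    and no_atom: "measure N {\<omega>\<in>space N. S x \<omega> = t} = 0"
  shows "(\<lambda>n. measure M {\<omega>\<in>space M. sibuya_rescaled_count Z \<alpha> t n \<omega> \<le> x})
    \<longlonglongrightarrow> measure N {\<omega>\<in>space N. t < S x \<omega>}"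
proof -
  note N = stable_subordinator_prob_space[OF S]
  have [measurable]: "(\<lambda>\<omega>. real (sibuya_sum Z k \<omega>)) \<in> borel_measurable M" for k
    by (rule measurable_sibuya_sum)
  have "(\<lambda>n. measure M {\<omega>\<in>space M. t < sibuya_rescaled_sum Z \<alpha> x n \<omega>})
      \<longlonglongrightarrow> measure N {\<omega>\<in>space N. t < S x \<omega>}"
  proof (rule laplace_conv_imp_tail_conv[OF prob_space_axioms N _ _ _ _ _ no_atom])
    show "sibuya_rescaled_sum Z \<alpha> x n \<in> borel_measurable M" for n
      unfolding sibuya_rescaled_sum_def by measurable
    show "S x \<in> borel_measurable N"
      using stable_subordinator_measurable[OF S] \<open>0 \<le> x\<close> .
    show "0 \<le> sibuya_rescaled_sum Z \<alpha> x n \<omega>" for n \<omega>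
      by (simp add: sibuya_rescaled_sum_def)
    show "0 \<le> S x \<omega>" if "\<omega> \<in> space N" for \<omega>
      using stable_subordinator_nonneg[OF S that \<open>0 \<le> x\<close>] .
    show "(\<lambda>n. \<integral>\<omega>. exp (- real m * sibuya_rescaled_sum Z \<alpha> x n \<omega>) \<partial>M)
        \<longlonglongrightarrow> (\<integral>\<omega>. exp (- real m * S x \<omega>) \<partial>N)" for m :: nat
      using sibuya_rescaled_sum_laplace_limit[OF \<open>0 \<le> x\<close>, of m]
        stable_subordinator_laplace[OF S \<open>0 \<le> x\<close>, of "real m"] by simp
  qed
  moreover have "\<forall>\<^sub>F n in sequentially. measure M {\<omega>\<in>space M. t < sibuya_rescaled_sum Z \<alpha> x n \<omega>} =
      measure M {\<omega>\<in>space M. sibuya_rescaled_count Z \<alpha> t n \<omega> \<le> x}"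
    using eventually_ge_at_top[of 1]
    by eventually_elim (use sibuya_count_cdf_eq_rescaled_tail \<open>0 < t\<close> \<open>0 \<le> x\<close> in simp)
  ultimately show ?thesis
    by (rule Lim_transform_eventually)
qed

lemma sibuya_count_cdf_tendsto_inv_hitting_cdf:
  assumes S: "stable_subordinator N \<alpha> S" and "0 < t"
    and cont: "isCont (cdf (distr N borel (inv_hitting S t))) x"
  shows "(\<lambda>n. measure M {\<omega>\<in>space M. sibuya_rescaled_count Z \<alpha> t n \<omega> \<le> x})
    \<longlonglongrightarrow> cdf (distr N borel (inv_hitting S t)) x"
proof (cases "x < 0")
  case True
  then have empty: "{\<omega>\<in>space M. sibuya_rescaled_count Z \<alpha> t n \<omega> \<le> x} = {}" for n
    by (auto simp: sibuya_rescaled_count_def not_le intro: order.strict_trans2[OF True])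
  show ?thesis
    using stable_subordinator_inv_hitting_cdf_neg[OF S True]
    by (simp add: empty cdf_distr stable_subordinator_inv_hitting_measurable[OF S])
next
  case False
  then show ?thesis
    using sibuya_count_cdf_limit[OF S \<open>0 < t\<close>, of x]
      stable_subordinator_inv_hitting_cdf_isCont[OF S alpha_pos \<open>0 < t\<close> _ cont]
    by simp
qed

end

theorem mainTheorem1:
  fixes M :: "'a measure" and N :: "'b measure" and \<alpha> t :: real
    and Z :: "nat \<Rightarrow> 'a \<Rightarrow> nat" and S :: "real \<Rightarrow> 'b \<Rightarrow> real"
  assumes "0 < \<alpha>" "\<alpha> < 1"
    and "prob_space M"
    and "prob_space.indep_vars M (\<lambda>_. count_space UNIV) Z {1..}"
    and "\<And>i k. 1 \<le> i \<Longrightarrow> 1 \<le> k \<Longrightarrow>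
           measure M {\<omega>\<in>space M. Z i \<omega> = k} = sibuya_pmf \<alpha> k"
    and "stable_subordinator N \<alpha> S"
    and "0 < t"
  shows "weak_conv_m
           (\<lambda>n. distr M borel
                  (\<lambda>\<omega>. real n powr (- \<alpha>) * real (sibuya_count Z (nat \<lfloor>real n * t\<rfloor>) \<omega>)))
           (distr N borel (inv_hitting S t))"
proof -
  interpret sibuya_process M \<alpha> Z
    using assms(1,3-5) by (simp add: sibuya_process_def sibuya_process_axioms_def)
  have "sibuya_rescaled_count Z \<alpha> t n \<in> borel_measurable M" for n
    unfolding sibuya_rescaled_count_def using measurable_sibuya_count by measurable
  then have "weak_conv_m (\<lambda>n. distr M borel (sibuya_rescaled_count Z \<alpha> t n))
      (distr N borel (inv_hitting S t))"
    unfolding weak_conv_m_def weak_conv_def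
    using sibuya_count_cdf_tendsto_inv_hitting_cdf[OF assms(6,7)] by (simp add: cdf_distr)
  then show ?thesis
    by (simp add: sibuya_rescaled_count_def[abs_def])
qed

end
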